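(* Consider the following single-link transmission system. Time is slotted, $t=0,1,2,\dots$. A fixed amount $\delta>0$ of mutual information is called a data unit. A sequence of packets $f=0,1,2,\dots$ is transmitted one at a time; packet $f$ has length $L[f]$, a positive integer number of data units, with $\{L[f]\}$ i.i.d. taking values in a finite set $\mathcal{L}$, and $L_{\max}=\max_{L\in\mathcal{L}}L$. The channel gain $\alpha(t)>0$ is i.i.d. over slots taking values in a finite set $\mathcal{A}=\{\alpha_1,\dots,\alpha_{|\mathcal{A}|}\}$ with probabilities $\phi(\alpha_i)$. In each slot the source picks a power spectral density $P(t)\in\mathcal{P}=\{P_1,\dots,P_{|\mathcal{P}|}\}$ with $0<P_1<P_2<\cdots<P_{|\mathcal{P}|}$, before observing $\alpha(t)$; the receiver then accumulates $K(\alpha(t),P(t))$ data units, where $K:\mathcal{A}\times\mathcal{P}\to\{1,2,3,\dots\}$ is nondecreasing in each argument, and $K_{\min}=\min_{\alpha\in\mathcal{A}}K(\alpha,P_1)$. Frame $f$ starts at slot $t_f$ (with $t_0=0$) and ends at the first slot $t_{f+1}-1$ such that $\sum_{t=t_f}^{t_{f+1}-1}K(\alpha(t),P(t))\ge L[f]$; $T[f]=t_{f+1}-t_f$. Let $\beta>0$ with $P_1<\beta$, and let $V>0$. The proposed algorithm maintains $Q[0]=0$, $Q[f+1]=\max\{Q[f]+\sum_{t=t_f}^{t_{f+1}-1}(P(t)-\beta),0\}$, and defines $R_f(P)=V+Q[f](P-\beta)$ for $P\in\mathcal{P}$. At the start of frame $f$, having observed $Q[f]$ and $L[f]$, it chooses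 power allocations over the frame so as to minimize $\mathbb{E}\big[\sum_{t=t_f}^{t_{f+1}-1}R_f(P(t))\,\big|\,Q[f],L[f]\big]$ subject to $\sum_{t=t_f}^{t_{f+1}-1}K(\alpha(t),P(t))\ge L[f]$; in particular, whenever $R_f(P_j)<0$ for some $P_j\in\mathcal{P}$, it uses $P(t)=P_1$ in every slot of frame $f$ (and otherwise uses a dynamic-programming solution of the minimization). Then for all $f\in\{1,2,3,\dots\}$, \[Q[f]\le \max\left\{\frac{V}{\beta-P_1}+\left\lceil\frac{L_{\max}}{K_{\min}}\right\rceil\,(P_{|\mathcal{P}|}-\beta),\;0\right\}.\]
   Context: $\lceil x\rceil$ is the smallest integer greater than or equal to $x$. The source observes $L[f]$ at the start of frame $f$, does not observe $\alpha(t)$ before choosing $P(t)$, knows the distribution $\phi$, and learns $\alpha(t)$ (hence the delivered mutual information) by feedback at the end of slot $t$. The source cannot start a new packet before the previous one is decoded. *)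

theory Defs
  imports Complex_Main
begin

text \<open>Sample-path model of the single-link system.\<close>

fun frame_start :: "(real \<Rightarrow> real \<Rightarrow> nat) \<Rightarrow> (nat \<Rightarrow> real) \<Rightarrow> (nat \<Rightarrow> real)
    \<Rightarrow> (nat \<Rightarrow> nat) \<Rightarrow> nat \<Rightarrow> nat" where
  "frame_start K alpha Pw Lp 0 = 0"
| "frame_start K alpha Pw Lp (Suc f) =
     (LEAST t. frame_start K alpha Pw Lp f < t \<and>
        real (Lp f) \<le> (\<Sum>s\<in>{frame_start K alpha Pw Lp f..<t}. real (K (alpha s) (Pw s))))"

fun Qv :: "(real \<Rightarrow> real \<Rightarrow> nat) \<Rightarrow> (nat \<Rightarrow> real) \<Rightarrow> (nat \<Rightarrow> real)
    \<Rightarrow> (nat \<Rightarrow> nat) \<Rightarrow> real \<Rightarrow> nat \<Rightarrow> real" where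
  "Qv K alpha Pw Lp \<beta> 0 = 0"
| "Qv K alpha Pw Lp \<beta> (Suc f) =
     max (Qv K alpha Pw Lp \<beta> f +
          (\<Sum>t\<in>{frame_start K alpha Pw Lp f..<frame_start K alpha Pw Lp (Suc f)}. Pw t - \<beta>)) 0"

text \<open>Finite-horizon dynamic programme for one frame with per-slot cost \<open>R\<close>:
 \<open>Jn \<dots> n r\<close> is the minimal expected cost to deliver \<open>r\<close> remaining data units
 (horizon bound \<open>n\<close>; since \<open>K \<ge> 1\<close>, \<open>n = r\<close> gives the exact optimum).\<close>
fun Jn :: "(real \<Rightarrow> real) \<Rightarrow> real set \<Rightarrow> real set \<Rightarrow> (real \<Rightarrow> real)
    \<Rightarrow> (real \<Rightarrow> real \<Rightarrow> nat) \<Rightarrow> nat \<Rightarrow> nat \<Rightarrow> real" where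
  "Jn R Ps As \<phi> K 0 r = 0"
| "Jn R Ps As \<phi> K (Suc n) r =
     (if r = 0 then 0
      else Min ((\<lambda>P. R P + (\<Sum>a\<in>As. \<phi> a * Jn R Ps As \<phi> K n (r - K a P))) ` Ps))"

definition frame_value :: "(real \<Rightarrow> real) \<Rightarrow> real set \<Rightarrow> real set \<Rightarrow> (real \<Rightarrow> real)
    \<Rightarrow> (real \<Rightarrow> real \<Rightarrow> nat) \<Rightarrow> nat \<Rightarrow> real" where
  "frame_value R Ps As \<phi> K r = Jn R Ps As \<phi> K r r"

definition dp_cost :: "(real \<Rightarrow> real) \<Rightarrow> real set \<Rightarrow> real set \<Rightarrow> (real \<Rightarrow> real)
    \<Rightarrow> (real \<Rightarrow> real \<Rightarrow> nat) \<Rightarrow> nat \<Rightarrow> real \<Rightarrow> real" where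
  "dp_cost R Ps As \<phi> K r P =
     R P + (\<Sum>a\<in>As. \<phi> a * frame_value R Ps As \<phi> K (r - K a P))"

end

theory Submission
  imports Defs
begin

text \<open>Every slot delivers at least \<open>K\<^sub>m\<^sub>i\<^sub>n\<close> data units, so a frame lasts at most
 \<open>\<lceil>L\<^sub>m\<^sub>a\<^sub>x / K\<^sub>m\<^sub>i\<^sub>n\<rceil>\<close> slots and raises \<open>Q\<close> by at most that many times \<open>P\<^sub>m\<^sub>a\<^sub>x - \<beta>\<close>.
 Once \<open>Q[f] > V / (\<beta> - P\<^sub>1)\<close>, the weight \<open>R\<^sub>f(P\<^sub>1) = V + Q[f](P\<^sub>1 - \<beta>)\<close> is negative, so the
 algorithm uses \<open>P\<^sub>1 < \<beta>\<close> throughout frame \<open>f\<close> and \<open>Q\<close> does not grow.\<close>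

(* Left as a simp rule, the LEAST in frame_start makes simp diverge on sums over frames. *)
declare frame_start.simps(2) [simp del]

lemma frame_start_Suc_le:
  assumes "0 < Lp f"
    and "real (Lp f) \<le> (\<Sum>s\<in>{frame_start K alpha Pw Lp f..<frame_start K alpha Pw Lp f + n}.
                          real (K (alpha s) (Pw s)))"
  shows "frame_start K alpha Pw Lp (Suc f) \<le> frame_start K alpha Pw Lp f + n"
proof -
  let ?s = "frame_start K alpha Pw Lp f"
  have "n \<noteq> 0"
  proof
    assume "n = 0"
    with assms show False
      by simp
  qed
  then have "?s < ?s + n \<and> real (Lp f) \<le> (\<Sum>s\<in>{?s..<?s + n}. real (K (alpha s) (Pw s)))"
    using assms(2) by simp
  then show ?thesis
    by (simp add: frame_start.simps(2) Least_le)
qed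

lemma frame_start_Suc_le_ceiling:
  assumes K_ge: "\<forall>t. k \<le> K (alpha t) (Pw t)" and "0 < k"
    and "0 < Lp f" and "Lp f \<le> L"
  shows "frame_start K alpha Pw Lp (Suc f)
           \<le> frame_start K alpha Pw Lp f + nat \<lceil>real L / real k\<rceil>"
proof (rule frame_start_Suc_le)
  let ?s = "frame_start K alpha Pw Lp f" and ?n = "nat \<lceil>real L / real k\<rceil>"
  have "real L / real k \<le> real ?n"
    by linarith
  then have "real L \<le> real ?n * real k"
    using \<open>0 < k\<close> by (metis of_nat_0_less_iff pos_divide_le_eq)
  then have "real (Lp f) \<le> real ?n * real k"
    using \<open>Lp f \<le> L\<close> by linarith
  also have "\<dots> = (\<Sum>s\<in>{?s..<?s + ?n}. real k)"
    by simp
  also have "\<dots> \<le> (\<Sum>s\<in>{?s..<?s + ?n}. real (K (alpha s) (Pw s)))"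
    using K_ge by (intro sum_mono) simp
  finally show "real (Lp f) \<le> (\<Sum>s\<in>{?s..<?s + ?n}. real (K (alpha s) (Pw s)))" .
qed (fact \<open>0 < Lp f\<close>)

lemma Qv_nonneg: "0 \<le> Qv K alpha Pw Lp \<beta> f"
  by (cases f) simp_all

lemma Qv_le_bound:
  assumes frame_len: "\<forall>f. frame_start K alpha Pw Lp (Suc f) \<le> frame_start K alpha Pw Lp f + n"
    and Pw_le: "\<forall>t. Pw t \<le> Pmax"
    and "P1 < \<beta>"
    and low_power: "\<forall>f. V + Qv K alpha Pw Lp \<beta> f * (P1 - \<beta>) < 0 \<longrightarrow>
        (\<forall>t\<in>{frame_start K alpha Pw Lp f..<frame_start K alpha Pw Lp (Suc f)}. Pw t = P1)"
  shows "Qv K alpha Pw Lp \<beta> f \<le> max (V / (\<beta> - P1) + real n * (Pmax - \<beta>)) 0"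
proof (induction f)
  case 0
  show ?case by simp
next
  case (Suc f)
  let ?Q = "Qv K alpha Pw Lp \<beta>" and ?a = "frame_start K alpha Pw Lp f"
    and ?b = "frame_start K alpha Pw Lp (Suc f)"
  let ?d = "\<Sum>t\<in>{?a..<?b}. Pw t - \<beta>"
  have Q_Suc: "?Q (Suc f) = max (?Q f + ?d) 0"
    by simp
  show ?case
  proof (cases "V + ?Q f * (P1 - \<beta>) < 0")
    case True
    then have "?d \<le> 0"
      using low_power \<open>P1 < \<beta>\<close> by (intro sum_nonpos) auto
    then show ?thesis
      using Suc.IH Qv_nonneg[of K alpha Pw Lp \<beta> f] by (simp add: Q_Suc)
  next
    case False
    then have Q_le: "?Q f \<le> V / (\<beta> - P1)"
      using \<open>P1 < \<beta>\<close> by (simp add: le_divide_eq algebra_simps)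
    have "?d \<le> (\<Sum>t\<in>{?a..<?b}. Pmax - \<beta>)"
      using Pw_le by (intro sum_mono) simp
    then have d_le: "?d \<le> real (?b - ?a) * (Pmax - \<beta>)"
      by simp
    show ?thesis
    proof (cases "Pmax \<le> \<beta>")
      case True
      then have "?d \<le> 0"
        using d_le by (meson order_trans mult_nonneg_nonpos of_nat_0_le_iff diff_le_0_iff_le)
      then show ?thesis
        using Suc.IH Qv_nonneg[of K alpha Pw Lp \<beta> f] by (simp add: Q_Suc)
    next
      case False
      have "?b - ?a \<le> n"
        using frame_len by (simp add: le_diff_conv add.commute)
      then have "real (?b - ?a) \<le> real n"
        by simp
      then have "?d \<le> real n * (Pmax - \<beta>)"
        using d_le False by (meson order_trans mult_right_mono not_le diff_ge_0_iff_ge less_imp_le)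
      then show ?thesis
        using Q_le by (simp add: Q_Suc)
    qed
  qed
qed

theorem mainTheorem2:
  fixes As :: "real set" and \<phi> :: "real \<Rightarrow> real"
    and Ps :: "real set" and Ls :: "nat set"
    and K :: "real \<Rightarrow> real \<Rightarrow> nat"
    and alpha :: "nat \<Rightarrow> real" and Lp :: "nat \<Rightarrow> nat" and Pw :: "nat \<Rightarrow> real"
    and \<beta> V :: real
  assumes As_fin: "finite As" and As_ne: "As \<noteq> {}" and As_pos: "\<forall>a\<in>As. a > 0"
    and \<phi>_pos: "\<forall>a\<in>As. \<phi> a > 0" and \<phi>_sum: "(\<Sum>a\<in>As. \<phi> a) = 1"
    and Ps_fin: "finite Ps" and Ps_ne: "Ps \<noteq> {}" and Ps_pos: "\<forall>P\<in>Ps. P > 0"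
    and Ls_fin: "finite Ls" and Ls_ne: "Ls \<noteq> {}" and Ls_pos: "\<forall>l\<in>Ls. l > 0"
    and K_pos: "\<forall>a\<in>As. \<forall>P\<in>Ps. K a P \<ge> 1"
    and K_mono_a: "\<forall>a\<in>As. \<forall>a'\<in>As. \<forall>P\<in>Ps. a \<le> a' \<longrightarrow> K a P \<le> K a' P"
    and K_mono_P: "\<forall>a\<in>As. \<forall>P\<in>Ps. \<forall>P'\<in>Ps. P \<le> P' \<longrightarrow> K a P \<le> K a P'"
    and alpha_in: "\<forall>t. alpha t \<in> As"
    and Lp_in: "\<forall>f. Lp f \<in> Ls"
    and Pw_in: "\<forall>t. Pw t \<in> Ps"
    and \<beta>_gt: "Min Ps < \<beta>" and V_pos: "V > 0"
    and algorithm: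
      "\<forall>f. \<forall>t\<in>{frame_start K alpha Pw Lp f..<frame_start K alpha Pw Lp (Suc f)}.
         (let R = (\<lambda>P. V + Qv K alpha Pw Lp \<beta> f * (P - \<beta>));
              r = Lp f - (\<Sum>s\<in>{frame_start K alpha Pw Lp f..<t}. K (alpha s) (Pw s))
          in if (\<exists>P\<in>Ps. R P < 0) then Pw t = Min Ps
             else (\<forall>P\<in>Ps. dp_cost R Ps As \<phi> K r (Pw t) \<le> dp_cost R Ps As \<phi> K r P))"
  shows "\<forall>f\<ge>1. Qv K alpha Pw Lp \<beta> f \<le>
           max (V / (\<beta> - Min Ps)
                + of_int \<lceil>real (Max Ls) / real (Min ((\<lambda>a. K a (Min Ps)) ` As))\<rceil>
                  * (Max Ps - \<beta>)) 0"
proof -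
  define Kmin where "Kmin = Min ((\<lambda>a. K a (Min Ps)) ` As)"
  have "Min Ps \<in> Ps"
    using Ps_fin Ps_ne by simp
  have "0 < Kmin"
    using Min_in[of "(\<lambda>a. K a (Min Ps)) ` As"] As_fin As_ne K_pos \<open>Min Ps \<in> Ps\<close>
    by (force simp: Kmin_def)
  have "Kmin \<le> K (alpha t) (Pw t)" for t
    using alpha_in Pw_in K_mono_P \<open>Min Ps \<in> Ps\<close> Ps_fin As_fin
    by (fastforce simp: Kmin_def intro: order_trans[OF Min_le])
  then have frame_len: "\<forall>f. frame_start K alpha Pw Lp (Suc f)
      \<le> frame_start K alpha Pw Lp f + nat \<lceil>real (Max Ls) / real Kmin\<rceil>"
    using frame_start_Suc_le_ceiling \<open>0 < Kmin\<close> Ls_pos Lp_in Ls_fin by simp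
  have Pw_le: "\<forall>t. Pw t \<le> Max Ps"
    using Pw_in Ps_fin by simp
  have low_power: "\<forall>f. V + Qv K alpha Pw Lp \<beta> f * (Min Ps - \<beta>) < 0 \<longrightarrow>
      (\<forall>t\<in>{frame_start K alpha Pw Lp f..<frame_start K alpha Pw Lp (Suc f)}. Pw t = Min Ps)"
  proof (intro allI impI ballI)
    fix f t
    assume "V + Qv K alpha Pw Lp \<beta> f * (Min Ps - \<beta>) < 0"
    then have "\<exists>P\<in>Ps. V + Qv K alpha Pw Lp \<beta> f * (P - \<beta>) < 0"
      using \<open>Min Ps \<in> Ps\<close> by blast
    moreover assume "t \<in> {frame_start K alpha Pw Lp f..<frame_start K alpha Pw Lp (Suc f)}"
    ultimately show "Pw t = Min Ps"
      using algorithm unfolding Let_def by (simp only: if_True)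
  qed
  have real_nat_ceiling: "real (nat \<lceil>real (Max Ls) / real Kmin\<rceil>) = of_int \<lceil>real (Max Ls) / real Kmin\<rceil>"
    by simp
  have "Qv K alpha Pw Lp \<beta> f \<le> max (V / (\<beta> - Min Ps)
      + of_int \<lceil>real (Max Ls) / real Kmin\<rceil> * (Max Ps - \<beta>)) 0" for f
    using Qv_le_bound[OF frame_len Pw_le \<beta>_gt low_power] by (simp only: real_nat_ceiling)
  then show ?thesis
    unfolding Kmin_def by blast
qed

end
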